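(* Fix $d\ge 0$ and let $n\ge 2d^2+2d$. If $p\in\mathcal H(n,d)$, then $N(p)\ge (n-1)d+1$. Furthermore, if $N(p)=(n-1)d+1$, then $p\in\mathcal W$.
   Context: Write $s(x)=\sum_{j=1}^n x_j$. $\mathcal H(n,d)$ is the set of real polynomials in $x_1,\dots,x_n$ of total degree exactly $d$, with all coefficients nonnegative, such that $p(x)=1$ whenever $s(x)=1$. $N(p)$ denotes the number of distinct monomials occurring with nonzero coefficient in $p$. $\mathcal W$ is the set of polynomials obtainable from the constant polynomial $1$ by finitely many applications of operations of the form $g\mapsto g-u+s\,u$, where at each step $u$ is a polynomial such that both $u$ and $g-u$ have nonnegative coefficients. *)

theory Defs
  imports Complex_Main "HOL-Library.Poly_Mapping"
begin

(* Real polynomials in the variables x_0,...,x_{n-1} (standing for x_1..x_n):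
   a finitely supported map from exponent vectors (monomials) to coefficients. *)
type_synonym mpoly = "(nat \<Rightarrow>\<^sub>0 nat) \<Rightarrow>\<^sub>0 real"

definition in_vars :: "nat \<Rightarrow> mpoly \<Rightarrow> bool" where
  "in_vars n p \<longleftrightarrow> (\<forall>\<alpha>\<in>Poly_Mapping.keys p. Poly_Mapping.keys \<alpha> \<subseteq> {..<n})"

definition mon_deg :: "(nat \<Rightarrow>\<^sub>0 nat) \<Rightarrow> nat" where
  "mon_deg \<alpha> = (\<Sum>i\<in>Poly_Mapping.keys \<alpha>. Poly_Mapping.lookup \<alpha> i)"

(* total degree of a nonzero polynomial *)
definition tdeg :: "mpoly \<Rightarrow> nat" where
  "tdeg p = Max (mon_deg ` Poly_Mapping.keys p)"

definition eval :: "mpoly \<Rightarrow> (nat \<Rightarrow> real) \<Rightarrow> real" where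
  "eval p x = (\<Sum>\<alpha>\<in>Poly_Mapping.keys p. Poly_Mapping.lookup p \<alpha> * (\<Prod>i\<in>Poly_Mapping.keys \<alpha>. x i ^ Poly_Mapping.lookup \<alpha> i))"

definition nonneg_coeffs :: "mpoly \<Rightarrow> bool" where
  "nonneg_coeffs p \<longleftrightarrow> (\<forall>\<alpha>. Poly_Mapping.lookup p \<alpha> \<ge> 0)"

definition var :: "nat \<Rightarrow> mpoly" where
  "var j = Poly_Mapping.single (Poly_Mapping.single j 1) 1"

definition svar :: "nat \<Rightarrow> mpoly" where
  "svar n = (\<Sum>j<n. var j)"

definition H :: "nat \<Rightarrow> nat \<Rightarrow> mpoly set" where
  "H n d = {p. in_vars n p \<and> p \<noteq> 0 \<and> tdeg p = d \<and> nonneg_coeffs p \<and>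
              (\<forall>x. (\<Sum>j<n. x j) = 1 \<longrightarrow> eval p x = 1)}"

definition N :: "mpoly \<Rightarrow> nat" where
  "N p = card (Poly_Mapping.keys p)"

inductive_set W :: "nat \<Rightarrow> mpoly set" for n :: nat where
  one: "1 \<in> W n"
| step: "g \<in> W n \<Longrightarrow> nonneg_coeffs u \<Longrightarrow> nonneg_coeffs (g - u) \<Longrightarrow>
         g - u + svar n * u \<in> W n"

end

theory Submission
  imports Defs "HOL-Computational_Algebra.Polynomial"
begin

(* If some variable x_j occurs at most linearly in p, write p = a + x_j A with a and A free of x_j.
   As p = 1 on the hyperplane s = 1, substituting x_j = 1 - (s - x_j) gives p - 1 = (s - 1) A, where A
   has nonnegative coefficients and degree < d; comparing coefficients, p + A = 1 + s A.  Hence the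
   monomials of A of each degree m < d form a nonempty set T_m, and every monomial of
   (T_m + {x_1, ..., x_n}) - T_(m+1) occurs in p.  Since |T + {x_1, ..., x_n}| >= |T| + n - 1, summing over
   the layers gives N(p) >= (n - 1) d + 1.  Writing A = A_0 + ... + A_(d-1) by degree, the moves
   g -> g - A_k + s A_k lead from 1 to p = 1 + (s - 1) A, all intermediate polynomials having
   nonnegative coefficients by the same identity.

   If instead every variable occurs squared in some monomial, suppose N(p) <= (n - 1) d + 1 and take
   x_j lying in the fewest monomials, at most d N(p) / n of them, and a monomial alpha with
   alpha_j >= 2, so that |supp alpha| < d.  From the variables outside supp alpha discard one variable of
   each other monomial through x_j not supported in supp alpha, and call the rest Z.  For a, b in Z,
   restricting p = 1 to a plane in x_j, x_a, x_b and taking the coefficient of u^(K-1) v, where K is the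
   largest exponent of x_j in a monomial supported in supp alpha, yields a monomial of p without x_j
   whose support leaves supp alpha exactly in {a, b}.  Hence N(p) > (|Z| choose 2), which is too large
   when n >= 2 d^2 + 2 d. *)

abbreviation lookup :: "('a \<Rightarrow>\<^sub>0 'b::zero) \<Rightarrow> 'a \<Rightarrow> 'b" where
  "lookup \<equiv> Poly_Mapping.lookup"

abbreviation keys :: "('a \<Rightarrow>\<^sub>0 'b::zero) \<Rightarrow> 'a set" where
  "keys \<equiv> Poly_Mapping.keys"

(* Suc 0 rather than 1: it is the form the simplifier gives to Poly_Mapping.single i 1. *)
abbreviation var_exp :: "nat \<Rightarrow> nat \<Rightarrow>\<^sub>0 nat" where
  "var_exp i \<equiv> Poly_Mapping.single i (Suc 0)"

definition mon_eval :: "(nat \<Rightarrow>\<^sub>0 nat) \<Rightarrow> (nat \<Rightarrow> real) \<Rightarrow> real" where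
  "mon_eval \<beta> x = (\<Prod>i\<in>keys \<beta>. x i ^ lookup \<beta> i)"

lemma eval_eq_sum_mon_eval: "eval p x = (\<Sum>\<alpha>\<in>keys p. lookup p \<alpha> * mon_eval \<alpha> x)"
  by (simp add: eval_def mon_eval_def)

lemma mon_eval_superset:
  assumes "finite F" "keys \<beta> \<subseteq> F"
  shows "mon_eval \<beta> x = (\<Prod>i\<in>F. x i ^ lookup \<beta> i)"
  unfolding mon_eval_def
  by (rule prod.mono_neutral_left) (use assms in \<open>auto simp: in_keys_iff\<close>)

lemma mon_eval_add: "mon_eval (\<beta> + \<gamma>) x = mon_eval \<beta> x * mon_eval \<gamma> x"
proof -
  let ?F = "keys \<beta> \<union> keys \<gamma>"
  have "mon_eval (\<beta> + \<gamma>) x = (\<Prod>i\<in>?F. x i ^ lookup (\<beta> + \<gamma>) i)"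
    by (rule mon_eval_superset) (auto dest: keys_add[THEN subsetD])
  also have "\<dots> = (\<Prod>i\<in>?F. x i ^ lookup \<beta> i * x i ^ lookup \<gamma> i)"
    by (simp add: lookup_add power_add)
  also have "\<dots> = mon_eval \<beta> x * mon_eval \<gamma> x"
    by (simp add: prod.distrib mon_eval_superset[of ?F])
  finally show ?thesis .
qed

lemma mon_eval_var_exp [simp]: "mon_eval (var_exp i) x = x i"
  by (simp add: mon_eval_def)

lemma eval_superset:
  assumes "finite F" "keys p \<subseteq> F"
  shows "eval p x = (\<Sum>\<alpha>\<in>F. lookup p \<alpha> * mon_eval \<alpha> x)"
  unfolding eval_eq_sum_mon_eval
  by (rule sum.mono_neutral_left) (use assms in \<open>auto simp: in_keys_iff\<close>)

lemma eval_add: "eval (p + q) x = eval p x + eval q x"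
proof -
  let ?F = "keys p \<union> keys q"
  have "eval (p + q) x = (\<Sum>\<alpha>\<in>?F. lookup (p + q) \<alpha> * mon_eval \<alpha> x)"
    by (rule eval_superset) (auto dest: keys_add[THEN subsetD])
  also have "\<dots> = eval p x + eval q x"
    by (simp add: lookup_add distrib_right sum.distrib eval_superset[of ?F])
  finally show ?thesis .
qed

lemma eval_diff: "eval (p - q) x = eval p x - eval q x"
proof -
  let ?F = "keys p \<union> keys q"
  have "eval (p - q) x = (\<Sum>\<alpha>\<in>?F. lookup (p - q) \<alpha> * mon_eval \<alpha> x)"
    by (rule eval_superset) (auto simp: in_keys_iff lookup_minus)
  also have "\<dots> = eval p x - eval q x"
    by (simp add: lookup_minus left_diff_distrib sum_subtractf eval_superset[of ?F])
  finally show ?thesis .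
qed

lemma eval_1 [simp]: "eval 1 x = 1"
  by (simp add: eval_eq_sum_mon_eval mon_eval_def)

lemma eval_0 [simp]: "eval 0 x = 0"
  by (simp add: eval_def)

lemma eval_sum: "finite I \<Longrightarrow> eval (\<Sum>i\<in>I. f i) x = (\<Sum>i\<in>I. eval (f i) x)"
  by (induction rule: finite_induct) (simp_all add: eval_add)

lemma eq_var_exp_add_iff:
  "\<beta> = var_exp i + \<gamma> \<longleftrightarrow> 1 \<le> lookup \<beta> i \<and> \<gamma> = \<beta> - var_exp i"
  by (auto simp: poly_mapping_eq_iff fun_eq_iff lookup_add lookup_minus lookup_single when_def)

lemma lookup_var_mult:
  "lookup (var i * C) \<beta> = (if 1 \<le> lookup \<beta> i then lookup C (\<beta> - var_exp i) else 0)"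
proof -
  have "lookup (var i * C) \<beta> = (\<Sum>\<gamma>. lookup C \<gamma> when \<beta> = var_exp i + \<gamma>)"
    by (simp add: var_def lookup_mult lookup_single when_mult)
  also have "\<dots> = (\<Sum>\<gamma>. lookup C \<gamma> when 1 \<le> lookup \<beta> i \<and> \<gamma> = \<beta> - var_exp i)"
    by (simp only: eq_var_exp_add_iff)
  finally show ?thesis
    by (cases "1 \<le> lookup \<beta> i") simp_all
qed

lemma keys_var_mult: "keys (var i * C) = (\<lambda>\<gamma>. var_exp i + \<gamma>) ` keys C"
proof -
  have "\<beta> \<in> keys (var i * C) \<longleftrightarrow> (\<exists>\<gamma>\<in>keys C. \<beta> = var_exp i + \<gamma>)" for \<beta>
    by (auto simp: in_keys_iff lookup_var_mult eq_var_exp_add_iff)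
  then show ?thesis by auto
qed

lemma eval_var_mult: "eval (var i * C) x = x i * eval C x"
proof -
  have "inj_on (\<lambda>\<gamma>. var_exp i + \<gamma>) (keys C)"
    by (rule inj_onI) simp
  then have "eval (var i * C) x =
      (\<Sum>\<gamma>\<in>keys C. lookup (var i * C) (var_exp i + \<gamma>) * mon_eval (var_exp i + \<gamma>) x)"
    by (simp add: eval_eq_sum_mon_eval keys_var_mult sum.reindex)
  also have "\<dots> = (\<Sum>\<gamma>\<in>keys C. lookup C \<gamma> * (x i * mon_eval \<gamma> x))"
    by (simp add: lookup_var_mult lookup_add mon_eval_add)
  finally show ?thesis
    by (simp add: eval_eq_sum_mon_eval sum_distrib_left mult.left_commute)
qed

lemma eval_svar_mult: "eval (svar n * C) x = (\<Sum>i<n. x i) * eval C x"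
  by (simp add: svar_def sum_distrib_right eval_sum eval_var_mult)

lemma lookup_svar_mult:
  "lookup (svar n * C) \<beta> = (\<Sum>i<n. if 1 \<le> lookup \<beta> i then lookup C (\<beta> - var_exp i) else 0)"
  by (simp add: svar_def sum_distrib_right lookup_sum lookup_var_mult)

lemma eval_update_free_var:
  assumes "\<forall>\<gamma>\<in>keys q. lookup \<gamma> j = 0"
  shows "eval q (x(j := t)) = eval q x"
proof -
  have "mon_eval \<gamma> (x(j := t)) = mon_eval \<gamma> x" if "\<gamma> \<in> keys q" for \<gamma>
    unfolding mon_eval_def using assms that by (intro prod.cong) (auto simp: in_keys_iff)
  then show ?thesis by (simp add: eval_eq_sum_mon_eval)
qed

section \<open>The identity principle\<close>

lemma coeff_eq_sum_of_poly_eq: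
  fixes c :: "'i \<Rightarrow> 'a::{comm_ring_1, ring_no_zero_divisors, ring_char_0}"
  assumes "finite I" and "\<And>u. (\<Sum>i\<in>I. c i * u ^ e i) = poly P u"
  shows "(\<Sum>i\<in>{i\<in>I. e i = k}. c i) = coeff P k"
proof -
  define Q where "Q = (\<Sum>i\<in>I. monom (c i) (e i))"
  have "poly Q = poly P"
    using assms(2) by (simp add: Q_def poly_sum poly_monom fun_eq_iff)
  then have "coeff P k = coeff Q k" by (simp add: poly_eq_poly_eq_iff)
  then show ?thesis
    using assms(1) by (simp add: Q_def coeff_sum coeff_monom sum.inter_filter)
qed

definition kronecker_exp :: "nat \<Rightarrow> nat \<Rightarrow> (nat \<Rightarrow>\<^sub>0 nat) \<Rightarrow> nat" where
  "kronecker_exp L B \<beta> = (\<Sum>i<L. lookup \<beta> i * B ^ i)"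

lemma mon_eval_kronecker:
  assumes "keys \<beta> \<subseteq> {..<L}"
  shows "mon_eval \<beta> (\<lambda>i. t ^ B ^ i) = t ^ kronecker_exp L B \<beta>"
proof -
  have "mon_eval \<beta> (\<lambda>i. t ^ B ^ i) = (\<Prod>i<L. (t ^ B ^ i) ^ lookup \<beta> i)"
    by (rule mon_eval_superset) (use assms in auto)
  also have "\<dots> = t ^ kronecker_exp L B \<beta>"
    by (simp add: kronecker_exp_def power_sum power_mult[symmetric] mult.commute)
  finally show ?thesis .
qed

lemma digit_sum_less:
  fixes f :: "nat \<Rightarrow> nat"
  assumes "\<forall>i<L. f i < B"
  shows "(\<Sum>i<L. f i * B ^ i) < B ^ L"
  using assms
proof (induction L)
  case (Suc L)
  have "(\<Sum>i<L. f i * B ^ i) < B ^ L" using Suc by auto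
  moreover have "(f L + 1) * B ^ L \<le> B * B ^ L"
    using Suc.prems by (intro mult_right_mono) auto
  ultimately show ?case by (simp add: algebra_simps)
qed simp

lemma digit_sum_inj:
  fixes f g :: "nat \<Rightarrow> nat"
  assumes "\<forall>i<L. f i < B" "\<forall>i<L. g i < B" "(\<Sum>i<L. f i * B ^ i) = (\<Sum>i<L. g i * B ^ i)"
  shows "\<forall>i<L. f i = g i"
  using assms
proof (induction L)
  case (Suc L)
  let ?Sf = "\<Sum>i<L. f i * B ^ i" and ?Sg = "\<Sum>i<L. g i * B ^ i"
  have lf: "?Sf < B ^ L" and lg: "?Sg < B ^ L"
    using Suc.prems by (auto intro!: digit_sum_less)
  have eq: "?Sf + f L * B ^ L = ?Sg + g L * B ^ L"
    using Suc.prems(3) by simp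
  have nz: "B ^ L \<noteq> 0"
    using lf by (metis not_less0)
  have "(?Sf + f L * B ^ L) div B ^ L = f L"
    using lf nz by simp
  moreover have "(?Sg + g L * B ^ L) div B ^ L = g L"
    using lg nz by simp
  ultimately have top: "f L = g L"
    using eq by simp
  then have "?Sf = ?Sg"
    using eq by simp
  moreover have "\<forall>i<L. f i < B" "\<forall>i<L. g i < B"
    using Suc.prems by auto
  ultimately have "\<forall>i<L. f i = g i"
    using Suc.IH by blast
  with top show ?case
    by (auto simp: less_Suc_eq)
qed simp

lemma inj_on_kronecker_exp:
  assumes "\<forall>\<beta>\<in>K. keys \<beta> \<subseteq> {..<L} \<and> (\<forall>i. lookup \<beta> i < B)"
  shows "inj_on (kronecker_exp L B) K"
proof (rule inj_onI)
  fix \<beta> \<gamma> assume \<beta>: "\<beta> \<in> K" and \<gamma>: "\<gamma> \<in> K"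
    and eq: "kronecker_exp L B \<beta> = kronecker_exp L B \<gamma>"
  have "(\<Sum>i<L. lookup \<beta> i * B ^ i) = (\<Sum>i<L. lookup \<gamma> i * B ^ i)"
    using eq by (simp add: kronecker_exp_def)
  moreover have "\<forall>i<L. lookup \<beta> i < B" "\<forall>i<L. lookup \<gamma> i < B"
    using assms \<beta> \<gamma> by blast+
  ultimately have low: "\<forall>i<L. lookup \<beta> i = lookup \<gamma> i"
    using digit_sum_inj[of L "lookup \<beta>" B "lookup \<gamma>"] by blast
  have "lookup \<beta> i = lookup \<gamma> i" for i
  proof (cases "i < L")
    case False
    then have "i \<notin> keys \<beta>" "i \<notin> keys \<gamma>"
      using assms \<beta> \<gamma> by auto
    then show ?thesis by (simp add: in_keys_iff)
  qed (use low in blast)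
  then show "\<beta> = \<gamma>"
    by (rule poly_mapping_eqI)
qed

lemma exists_kronecker_bounds:
  fixes K :: "(nat \<Rightarrow>\<^sub>0 nat) set"
  assumes "finite K"
  obtains L B where "\<forall>\<beta>\<in>K. keys \<beta> \<subseteq> {..<L} \<and> (\<forall>i. lookup \<beta> i < B)"
proof -
  obtain L where L: "(\<Union>\<beta>\<in>K. keys \<beta>) \<subseteq> {..<L}"
    using assms finite_nat_bounded[of "\<Union>\<beta>\<in>K. keys \<beta>"] by auto
  obtain B where B: "(\<Union>\<beta>\<in>K. Poly_Mapping.range \<beta>) \<subseteq> {..<B}"
    using assms finite_nat_bounded[of "\<Union>\<beta>\<in>K. Poly_Mapping.range \<beta>"] by auto
  have "lookup \<beta> i < Suc B" if "\<beta> \<in> K" for \<beta> i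
  proof (cases "i \<in> keys \<beta>")
    case True
    then have "lookup \<beta> i \<in> Poly_Mapping.range \<beta>" by simp
    then show ?thesis using B that by auto
  qed (simp add: in_keys_iff)
  with L show thesis
    by (intro that[of L "Suc B"]) blast
qed

lemma inj_eval: "inj eval"
proof (rule injI)
  fix p q :: mpoly
  assume "eval p = eval q"
  then have zero: "eval (p - q) x = 0" for x
    by (simp add: eval_diff)
  let ?K = "keys (p - q)"
  obtain L B where LB: "\<forall>\<beta>\<in>?K. keys \<beta> \<subseteq> {..<L} \<and> (\<forall>i. lookup \<beta> i < B)"
    using exists_kronecker_bounds[of ?K] by auto
  \<comment> \<open>Kronecker substitution \<open>x\<^sub>i = t ^ B ^ i\<close> turns \<open>p - q\<close> into a univariate polynomial\<close>
  have "eval (p - q) (\<lambda>i. t ^ B ^ i) = (\<Sum>\<beta>\<in>?K. lookup (p - q) \<beta> * t ^ kronecker_exp L B \<beta>)"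
    for t
    unfolding eval_eq_sum_mon_eval using LB by (intro sum.cong) (simp_all add: mon_eval_kronecker)
  then have "(\<Sum>\<beta>\<in>?K. lookup (p - q) \<beta> * t ^ kronecker_exp L B \<beta>) = poly 0 t" for t
    using zero by simp
  then have coeff: "(\<Sum>\<beta>\<in>{\<beta>\<in>?K. kronecker_exp L B \<beta> = k}. lookup (p - q) \<beta>) = 0" for k
    using coeff_eq_sum_of_poly_eq[of ?K "lookup (p - q)" "kronecker_exp L B" 0 k] by simp
  have "lookup (p - q) \<beta> = 0" for \<beta>
  proof (cases "\<beta> \<in> ?K")
    case True
    then have "{\<gamma>\<in>?K. kronecker_exp L B \<gamma> = kronecker_exp L B \<beta>} = {\<beta>}"
      using inj_on_kronecker_exp[OF LB] by (auto simp: inj_on_eq_iff)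
    then show ?thesis
      using coeff[of "kronecker_exp L B \<beta>"] by simp
  qed (simp add: in_keys_iff)
  then have "p - q = 0"
    by (intro poly_mapping_eqI) simp
  then show "p = q" by simp
qed

lemma mon_deg_superset: "finite F \<Longrightarrow> keys \<beta> \<subseteq> F \<Longrightarrow> mon_deg \<beta> = (\<Sum>i\<in>F. lookup \<beta> i)"
  unfolding mon_deg_def by (rule sum.mono_neutral_left) (auto simp: in_keys_iff)

lemma mon_deg_add: "mon_deg (\<beta> + \<gamma>) = mon_deg \<beta> + mon_deg \<gamma>"
proof -
  let ?F = "keys \<beta> \<union> keys \<gamma>"
  have "mon_deg (\<beta> + \<gamma>) = (\<Sum>i\<in>?F. lookup (\<beta> + \<gamma>) i)"
    by (rule mon_deg_superset) (auto dest: keys_add[THEN subsetD])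
  then show ?thesis by (simp add: lookup_add sum.distrib mon_deg_superset[of ?F])
qed

lemma mon_deg_0 [simp]: "mon_deg 0 = 0"
  by (simp add: mon_deg_def)

lemma mon_deg_var_exp [simp]: "mon_deg (var_exp i) = 1"
  by (simp add: mon_deg_def)

lemma mon_deg_eq_0_iff: "mon_deg \<beta> = 0 \<longleftrightarrow> \<beta> = 0"
  by (auto simp: mon_deg_def in_keys_iff poly_mapping_eq_iff fun_eq_iff)

lemma var_exp_add_minus: "1 \<le> lookup \<beta> i \<Longrightarrow> var_exp i + (\<beta> - var_exp i) = \<beta>"
  using eq_var_exp_add_iff[of \<beta> i] by metis

lemma mon_deg_minus_var_exp:
  "1 \<le> lookup \<beta> i \<Longrightarrow> mon_deg (\<beta> - var_exp i) + 1 = mon_deg \<beta>"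
  using mon_deg_add[of "var_exp i" "\<beta> - var_exp i"] by (simp add: var_exp_add_minus)

lemma card_keys_le_mon_deg: "card (keys \<beta>) \<le> mon_deg \<beta>"
proof -
  have "card (keys \<beta>) = (\<Sum>i\<in>keys \<beta>. 1)" by simp
  also have "\<dots> \<le> (\<Sum>i\<in>keys \<beta>. lookup \<beta> i)" by (rule sum_mono) (auto simp: in_keys_iff)
  finally show ?thesis by (simp add: mon_deg_def)
qed

lemma H_nonneg_coeffs: "p \<in> H n d \<Longrightarrow> nonneg_coeffs p"
  by (simp add: H_def)

lemma H_eval: "p \<in> H n d \<Longrightarrow> (\<Sum>j<n. x j) = 1 \<Longrightarrow> eval p x = 1"
  by (simp add: H_def)

lemma H_keys_vars: "p \<in> H n d \<Longrightarrow> \<beta> \<in> keys p \<Longrightarrow> keys \<beta> \<subseteq> {..<n}"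
  by (auto simp: H_def in_vars_def)

lemma H_mon_deg_le: "p \<in> H n d \<Longrightarrow> \<beta> \<in> keys p \<Longrightarrow> mon_deg \<beta> \<le> d"
  by (auto simp: H_def tdeg_def)

lemma H_mon_deg_eq: "p \<in> H n d \<Longrightarrow> \<exists>\<beta>\<in>keys p. mon_deg \<beta> = d"
  using Max_in[of "mon_deg ` keys p"] by (auto simp: H_def tdeg_def)

section \<open>A variable of degree at most one\<close>

definition pm_restrict :: "('a \<Rightarrow> bool) \<Rightarrow> ('a \<Rightarrow>\<^sub>0 'b::zero) \<Rightarrow> 'a \<Rightarrow>\<^sub>0 'b" where
  "pm_restrict P f = Abs_poly_mapping (\<lambda>k. if P k then lookup f k else 0)"

lemma lookup_pm_restrict [simp]: "lookup (pm_restrict P f) k = (if P k then lookup f k else 0)"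
proof -
  have "finite {k. (if P k then lookup f k else 0) \<noteq> 0}"
    by (rule finite_subset[of _ "keys f"]) (auto simp: in_keys_iff)
  then show ?thesis by (simp add: pm_restrict_def)
qed

lemma keys_pm_restrict [simp]: "keys (pm_restrict P f) = {k \<in> keys f. P k}"
  by (auto simp: in_keys_iff split: if_splits)

lemma var_mult_cofactor:
  assumes "\<forall>\<beta>\<in>keys f. 1 \<le> lookup \<beta> j"
  obtains A where "f = var j * A" "\<And>\<gamma>. lookup A \<gamma> = lookup f (var_exp j + \<gamma>)"
proof -
  have "finite {\<gamma>. lookup f (var_exp j + \<gamma>) \<noteq> 0}"
    by (rule finite_subset[of _ "(\<lambda>\<beta>. \<beta> - var_exp j) ` keys f"]) (force simp: in_keys_iff)+
  then have A: "lookup (Abs_poly_mapping (\<lambda>\<gamma>. lookup f (var_exp j + \<gamma>))) \<gamma> = lookup f (var_exp j + \<gamma>)"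
    for \<gamma> by simp
  moreover have "f = var j * Abs_poly_mapping (\<lambda>\<gamma>. lookup f (var_exp j + \<gamma>))"
  proof (rule poly_mapping_eqI)
    fix \<beta>
    show "lookup f \<beta> = lookup (var j * Abs_poly_mapping (\<lambda>\<gamma>. lookup f (var_exp j + \<gamma>))) \<beta>"
    proof (cases "1 \<le> lookup \<beta> j")
      case True
      then show ?thesis by (simp add: lookup_var_mult A var_exp_add_minus)
    next
      case False
      then show ?thesis using assms by (auto simp: lookup_var_mult in_keys_iff)
    qed
  qed
  ultimately show thesis
    using that by blast
qed

lemma s_minus_1_factor:
  assumes "j < n" and one: "\<And>x. (\<Sum>i<n. x i) = 1 \<Longrightarrow> eval p x = 1"
    and p: "p = a + var j * A"
    and a_free: "\<forall>\<gamma>\<in>keys a. lookup \<gamma> j = 0" and A_free: "\<forall>\<gamma>\<in>keys A. lookup \<gamma> j = 0"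
  shows "p - 1 = (svar n - 1) * A"
proof -
  have "eval (p - 1) x = eval ((svar n - 1) * A) x" for x
  proof -
    define r where "r = (\<Sum>i\<in>{..<n} - {j}. x i)"
    have sum_upd: "(\<Sum>i<n. (x(j := t)) i) = t + r" for t
    proof -
      have "(\<Sum>i\<in>{..<n} - {j}. (x(j := t)) i) = r"
        unfolding r_def by (rule sum.cong) auto
      then show ?thesis
        using \<open>j < n\<close> by (simp add: sum.remove[of "{..<n}" j])
    qed
    \<comment> \<open>on the simplex, \<open>x\<^sub>j = 1 - r\<close>, and \<open>a\<close>, \<open>A\<close> do not see \<open>x\<^sub>j\<close>\<close>
    have "eval p (x(j := 1 - r)) = 1"
      using one sum_upd by simp
    then have "eval a x + (1 - r) * eval A x = 1"
      using eval_update_free_var[OF a_free] eval_update_free_var[OF A_free]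
      by (simp add: p eval_add eval_var_mult)
    moreover have "(\<Sum>i<n. x i) = x j + r"
      using sum_upd[of "x j"] by simp
    moreover have "eval ((svar n - 1) * A) x = (\<Sum>i<n. x i) * eval A x - eval A x"
      by (simp add: left_diff_distrib eval_diff eval_svar_mult)
    moreover have "eval (p - 1) x = eval a x + x j * eval A x - 1"
      by (simp add: p eval_add eval_diff eval_var_mult)
    ultimately show ?thesis
      by (simp add: algebra_simps)
  qed
  then show ?thesis
    by (intro injD[OF inj_eval] ext)
qed

lemma H_linear_var_factor:
  assumes pH: "p \<in> H n d" and "j < n" and lin: "\<forall>\<beta>\<in>keys p. lookup \<beta> j \<le> 1"
  obtains A where "nonneg_coeffs A" "p - 1 = (svar n - 1) * A" "\<forall>\<gamma>\<in>keys A. mon_deg \<gamma> < d"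
proof -
  let ?a = "pm_restrict (\<lambda>\<beta>. lookup \<beta> j = 0) p"
  let ?b = "pm_restrict (\<lambda>\<beta>. lookup \<beta> j \<noteq> 0) p"
  have "\<forall>\<beta>\<in>keys ?b. 1 \<le> lookup \<beta> j"
    by (auto simp: in_keys_iff split: if_splits)
  then obtain A where b: "?b = var j * A" and A: "\<And>\<gamma>. lookup A \<gamma> = lookup ?b (var_exp j + \<gamma>)"
    using var_mult_cofactor[of ?b j] by blast
  have "p = ?a + ?b"
    by (rule poly_mapping_eqI) (simp add: lookup_add)
  also have "\<dots> = ?a + var j * A" by (simp only: b)
  finally have p: "p = ?a + var j * A" .
  have key_A: "var_exp j + \<gamma> \<in> keys p" if "\<gamma> \<in> keys A" for \<gamma>
    using that by (auto simp: in_keys_iff A split: if_splits)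
  have "\<forall>\<gamma>\<in>keys A. lookup \<gamma> j = 0"
    using lin key_A by (fastforce simp: lookup_add)
  then have "p - 1 = (svar n - 1) * A"
    using s_minus_1_factor[OF \<open>j < n\<close> H_eval[OF pH] p] by simp
  moreover have "nonneg_coeffs A"
    using H_nonneg_coeffs[OF pH] by (simp add: nonneg_coeffs_def A)
  moreover have "\<forall>\<gamma>\<in>keys A. mon_deg \<gamma> < d"
    using key_A H_mon_deg_le[OF pH] by (fastforce simp: mon_deg_add)
  ultimately show thesis
    using that by blast
qed

section \<open>The factorization \<open>p - 1 = (s - 1) A\<close>\<close>

lemma lookup_factor:
  assumes "p - 1 = (svar n - 1) * A"
  shows "lookup p \<beta> + lookup A \<beta> = lookup 1 \<beta> + lookup (svar n * A) \<beta>"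
proof -
  from assms have "p + A = 1 + svar n * A"
    by (simp add: algebra_simps)
  then show ?thesis
    by (metis lookup_add)
qed

lemma lookup_svar_mult_cong:
  assumes "\<And>\<gamma>. mon_deg \<gamma> + 1 = mon_deg \<beta> \<Longrightarrow> lookup C \<gamma> = lookup C' \<gamma>"
  shows "lookup (svar n * C) \<beta> = lookup (svar n * C') \<beta>"
  unfolding lookup_svar_mult using assms mon_deg_minus_var_exp by (intro sum.cong) auto

lemma nonneg_coeffs_truncated_factor:
  assumes "nonneg_coeffs p" and fac: "p - 1 = (svar n - 1) * A"
  shows "nonneg_coeffs (1 + (svar n - 1) * pm_restrict (\<lambda>\<gamma>. mon_deg \<gamma> < k) A
                          - pm_restrict (\<lambda>\<gamma>. mon_deg \<gamma> = k) A)"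
  unfolding nonneg_coeffs_def
proof
  fix \<beta>
  let ?B = "pm_restrict (\<lambda>\<gamma>. mon_deg \<gamma> < k) A"
  have val: "lookup (1 + (svar n - 1) * ?B - pm_restrict (\<lambda>\<gamma>. mon_deg \<gamma> = k) A) \<beta> =
      lookup 1 \<beta> + lookup (svar n * ?B) \<beta> - lookup ?B \<beta> - (if mon_deg \<beta> = k then lookup A \<beta> else 0)"
    by (simp add: left_diff_distrib lookup_add lookup_minus)
  show "0 \<le> lookup (1 + (svar n - 1) * ?B - pm_restrict (\<lambda>\<gamma>. mon_deg \<gamma> = k) A) \<beta>"
  proof (cases "mon_deg \<beta> \<le> k")
    case True
    \<comment> \<open>up to degree \<open>k\<close> the truncation does not change the coefficient: it is that of \<open>p\<close>\<close>
    have "lookup (svar n * ?B) \<beta> = lookup (svar n * A) \<beta>"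
      using True by (intro lookup_svar_mult_cong) simp
    with True val lookup_factor[OF fac, of \<beta>]
    have "lookup (1 + (svar n - 1) * ?B - pm_restrict (\<lambda>\<gamma>. mon_deg \<gamma> = k) A) \<beta> = lookup p \<beta>"
      by (cases "mon_deg \<beta> = k") auto
    then show ?thesis
      using \<open>nonneg_coeffs p\<close> by (simp add: nonneg_coeffs_def)
  next
    case False
    have "lookup (svar n * ?B) \<beta> = lookup (svar n * 0) \<beta>"
      using False by (intro lookup_svar_mult_cong) simp
    moreover have "\<beta> \<noteq> 0"
      using False by auto
    ultimately show ?thesis
      using False val by (simp add: lookup_one)
  qed
qed

lemma factor_in_W:
  assumes "nonneg_coeffs p" "nonneg_coeffs A" and fac: "p - 1 = (svar n - 1) * A"
    and deg: "\<forall>\<gamma>\<in>keys A. mon_deg \<gamma> < d"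
  shows "p \<in> W n"
proof -
  define B where "B k = pm_restrict (\<lambda>\<gamma>. mon_deg \<gamma> < k) A" for k
  define u where "u k = pm_restrict (\<lambda>\<gamma>. mon_deg \<gamma> = k) A" for k
  define g where "g k = 1 + (svar n - 1) * B k" for k
  have "g k \<in> W n" for k
  proof (induction k)
    case 0
    have "B 0 = 0"
      by (rule poly_mapping_eqI) (simp add: B_def)
    then show ?case by (simp add: g_def W.one)
  next
    case (Suc k)
    have "B (Suc k) = B k + u k"
      by (rule poly_mapping_eqI) (auto simp: B_def u_def lookup_add)
    then have "g (Suc k) = g k - u k + svar n * u k"
      by (simp add: g_def algebra_simps)
    moreover have "nonneg_coeffs (u k)"
      using \<open>nonneg_coeffs A\<close> by (simp add: nonneg_coeffs_def u_def)
    moreover have "nonneg_coeffs (g k - u k)"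
      using nonneg_coeffs_truncated_factor[OF \<open>nonneg_coeffs p\<close> fac, of k] by (simp add: g_def B_def u_def)
    ultimately show ?case
      using W.step[OF Suc] by simp
  qed
  moreover have "B d = A"
    using deg by (intro poly_mapping_eqI) (auto simp: B_def in_keys_iff)
  moreover have "p = 1 + (svar n - 1) * A"
    using fac by (simp add: algebra_simps)
  ultimately show ?thesis
    by (metis g_def)
qed

lemma factor_lower_key:
  assumes "nonneg_coeffs p" "nonneg_coeffs A" "p - 1 = (svar n - 1) * A"
    and "\<beta> \<in> keys p \<union> keys A" "\<beta> \<noteq> 0"
  shows "\<exists>i<n. 1 \<le> lookup \<beta> i \<and> \<beta> - var_exp i \<in> keys A"
proof (rule ccontr)
  assume "\<not> ?thesis"
  then have "lookup (svar n * A) \<beta> = 0"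
    unfolding lookup_svar_mult by (intro sum.neutral) (auto simp: in_keys_iff)
  moreover have "0 < lookup p \<beta> + lookup A \<beta>"
  proof -
    have "0 \<le> lookup p \<beta>" "0 \<le> lookup A \<beta>"
      using assms(1,2) by (simp_all add: nonneg_coeffs_def)
    moreover have "lookup p \<beta> \<noteq> 0 \<or> lookup A \<beta> \<noteq> 0"
      using assms(4) by (auto simp: in_keys_iff)
    ultimately show ?thesis by linarith
  qed
  ultimately show False
    using lookup_factor[OF assms(3), of \<beta>] \<open>\<beta> \<noteq> 0\<close> by (simp add: lookup_one)
qed

lemma factor_keys_all_degrees:
  assumes "nonneg_coeffs p" "nonneg_coeffs A" "p - 1 = (svar n - 1) * A"
    and "\<beta> \<in> keys p \<union> keys A" "m < mon_deg \<beta>"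
  shows "\<exists>\<gamma>\<in>keys A. mon_deg \<gamma> = m"
  using assms(4,5)
proof (induction "mon_deg \<beta>" arbitrary: \<beta>)
  case 0
  then show ?case by simp
next
  case (Suc k)
  then have "\<beta> \<noteq> 0" by auto
  then obtain i where "1 \<le> lookup \<beta> i" and \<gamma>: "\<beta> - var_exp i \<in> keys A"
    using factor_lower_key[OF assms(1-3) Suc.prems(1)] by blast
  then have "mon_deg (\<beta> - var_exp i) = k"
    using mon_deg_minus_var_exp Suc.hyps(2) by fastforce
  then show ?case
    using Suc.hyps(1)[of "\<beta> - var_exp i"] Suc.prems(2) Suc.hyps(2) \<gamma> by (cases "m = k") auto
qed

lemma factor_shifted_key:
  assumes "nonneg_coeffs A" "p - 1 = (svar n - 1) * A"
    and "\<gamma> \<in> keys A" "i < n" "var_exp i + \<gamma> \<notin> keys A"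
  shows "var_exp i + \<gamma> \<in> keys p"
proof -
  let ?\<beta> = "var_exp i + \<gamma>"
  have "lookup A \<gamma> = (if 1 \<le> lookup ?\<beta> i then lookup A (?\<beta> - var_exp i) else 0)"
    by (simp add: lookup_add)
  also have "\<dots> \<le> lookup (svar n * A) ?\<beta>"
    unfolding lookup_svar_mult
    by (rule member_le_sum) (use assms(1,4) in \<open>auto simp: nonneg_coeffs_def\<close>)
  finally have "lookup A \<gamma> \<le> lookup (svar n * A) ?\<beta>" .
  moreover have "0 < lookup A \<gamma>"
    using assms(1,3) by (simp add: nonneg_coeffs_def in_keys_iff order_less_le)
  moreover have "?\<beta> \<noteq> 0"
    using mon_deg_add[of "var_exp i" \<gamma>] mon_deg_eq_0_iff by fastforce
  ultimately show ?thesis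
    using lookup_factor[OF assms(2), of ?\<beta>] assms(5) by (auto simp: in_keys_iff lookup_one)
qed

section \<open>Counting monomials layer by layer\<close>

lemma card_sumset_var_exp:
  fixes T :: "(nat \<Rightarrow>\<^sub>0 nat) set"
  assumes "finite T" "T \<noteq> {}" "1 \<le> n"
  shows "card T + (n - 1) \<le> card ((\<lambda>(\<gamma>, i). var_exp i + \<gamma>) ` (T \<times> {..<n}))"
proof -
  \<comment> \<open>shift all of \<open>T\<close> by \<open>x\<^sub>0\<close>, and one element with least \<open>x\<^sub>0\<close>-exponent by every other variable\<close>
  let ?m = "Min ((\<lambda>t. lookup t 0) ` T)"
  have "?m \<in> (\<lambda>t. lookup t 0) ` T"
    using assms(1,2) by (intro Min_in) auto
  then obtain t0 where t0: "t0 \<in> T" "lookup t0 0 = ?m"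
    by auto
  have least: "lookup t0 0 \<le> lookup t 0" if "t \<in> T" for t
    using t0(2) Min_le[of "(\<lambda>t. lookup t 0) ` T"] assms(1) that by simp
  let ?S1 = "(\<lambda>t. var_exp 0 + t) ` T"
  let ?S2 = "(\<lambda>i. var_exp i + t0) ` {1..<n}"
  have "?S1 \<union> ?S2 \<subseteq> (\<lambda>(\<gamma>, i). var_exp i + \<gamma>) ` (T \<times> {..<n})"
    using assms(3) t0(1) by force
  then have "card (?S1 \<union> ?S2) \<le> card ((\<lambda>(\<gamma>, i). var_exp i + \<gamma>) ` (T \<times> {..<n}))"
    using assms(1) by (intro card_mono) auto
  moreover have "?S1 \<inter> ?S2 = {}"
  proof (rule ccontr)
    assume "?S1 \<inter> ?S2 \<noteq> {}"
    then obtain t i where "t \<in> T" "1 \<le> i" "var_exp 0 + t = var_exp i + t0"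
      by auto
    then have "lookup (var_exp 0 + t) 0 = lookup (var_exp i + t0) 0" "i \<noteq> 0"
      by simp_all
    then have "1 + lookup t 0 = lookup t0 0"
      by (simp add: lookup_add lookup_single_not_eq)
    with least[OF \<open>t \<in> T\<close>] show False by simp
  qed
  moreover have "inj_on (\<lambda>i. var_exp i + t0) {1..<n}"
  proof (rule inj_onI)
    fix i i' assume "var_exp i + t0 = var_exp i' + t0"
    then have "lookup (var_exp i) i = lookup (var_exp i') i"
      by simp
    then show "i = i'"
      by (cases "i = i'") (simp_all add: lookup_single_not_eq)
  qed
  moreover have "inj_on (\<lambda>t. var_exp 0 + t) T"
    by (rule inj_onI) simp
  ultimately show ?thesis
    using assms(1) by (simp add: card_Un_disjoint card_image)
qed

lemma sum_layers_lower_bound: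
  fixes t c :: "nat \<Rightarrow> nat"
  assumes "\<And>m. m < d \<Longrightarrow> t m + r \<le> c (Suc m) + t (Suc m)"
  shows "t 0 + d * r \<le> (\<Sum>k\<in>{1..d}. c k) + t d"
  using assms
proof (induction d)
  case (Suc d)
  then have "t 0 + d * r \<le> (\<Sum>k\<in>{1..d}. c k) + t d"
    by simp
  moreover have "t d + r \<le> c (Suc d) + t (Suc d)"
    using Suc.prems by simp
  ultimately show ?case by simp
qed simp

lemma factor_layer_step:
  assumes "1 \<le> n" "nonneg_coeffs A" and fac: "p - 1 = (svar n - 1) * A"
    and "\<exists>\<gamma>\<in>keys A. mon_deg \<gamma> = m"
  shows "card {\<gamma>\<in>keys A. mon_deg \<gamma> = m} + (n - 1)
           \<le> card {\<beta>\<in>keys p. mon_deg \<beta> = Suc m} + card {\<gamma>\<in>keys A. mon_deg \<gamma> = Suc m}"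
proof -
  let ?T = "\<lambda>m. {\<gamma>\<in>keys A. mon_deg \<gamma> = m}"
  let ?C = "{\<beta>\<in>keys p. mon_deg \<beta> = Suc m}"
  let ?S = "(\<lambda>(\<gamma>, i). var_exp i + \<gamma>) ` (?T m \<times> {..<n})"
  have "?S \<subseteq> ?C \<union> ?T (Suc m)"
    using factor_shifted_key[OF \<open>nonneg_coeffs A\<close> fac] by (auto simp: mon_deg_add)
  then have "card ?S \<le> card (?C \<union> ?T (Suc m))"
    by (intro card_mono) simp_all
  then have "card ?S \<le> card ?C + card (?T (Suc m))"
    using card_Un_le le_trans by blast
  moreover have "card (?T m) + (n - 1) \<le> card ?S"
    using assms(1,4) by (intro card_sumset_var_exp) auto
  ultimately show ?thesis by linarith
qed

lemma factor_card_keys_lower_bound: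
  assumes pH: "p \<in> H n d" and "1 \<le> n" and "nonneg_coeffs A"
    and fac: "p - 1 = (svar n - 1) * A" and deg: "\<forall>\<gamma>\<in>keys A. mon_deg \<gamma> < d"
  shows "(n - 1) * d + 1 \<le> N p"
proof -
  define T where "T m = {\<gamma> \<in> keys A. mon_deg \<gamma> = m}" for m
  define C where "C m = {\<beta> \<in> keys p. mon_deg \<beta> = m}" for m
  obtain \<beta>d where "\<beta>d \<in> keys p" "mon_deg \<beta>d = d"
    using H_mon_deg_eq[OF pH] by blast
  then have layers: "\<exists>\<gamma>\<in>keys A. mon_deg \<gamma> = m" if "m < d" for m
    using factor_keys_all_degrees[OF H_nonneg_coeffs[OF pH] \<open>nonneg_coeffs A\<close> fac, of \<beta>d m] that
    by auto
  show ?thesis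
  proof (cases "d = 0")
    case True
    have "0 < N p"
      using \<open>\<beta>d \<in> keys p\<close> by (auto simp: N_def card_gt_0_iff)
    then show ?thesis
      using True by simp
  next
    case False
    have "T 0 = {0}"
      using layers[of 0] False by (auto simp: T_def mon_deg_eq_0_iff)
    moreover have "T d = {}"
      using deg by (auto simp: T_def)
    moreover have "card (T m) + (n - 1) \<le> card (C (Suc m)) + card (T (Suc m))" if "m < d" for m
      unfolding T_def C_def using factor_layer_step[OF \<open>1 \<le> n\<close> \<open>nonneg_coeffs A\<close> fac layers[OF that]] .
    ultimately have "1 + d * (n - 1) \<le> (\<Sum>k\<in>{1..d}. card (C k))"
      using sum_layers_lower_bound[of d "\<lambda>m. card (T m)" "n - 1" "\<lambda>k. card (C k)"] by simp
    also have "\<dots> = card (\<Union>k\<in>{1..d}. C k)"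
      by (rule card_UN_disjoint[symmetric]) (auto simp: C_def)
    also have "\<dots> \<le> N p"
      unfolding N_def by (rule card_mono) (auto simp: C_def)
    finally show ?thesis by (simp add: mult.commute)
  qed
qed

section \<open>Every variable occurring squared\<close>

lemma eval_section_point:
  fixes V :: "nat set" and u v w :: real
  assumes "finite V" "j \<in> V" "a \<notin> V" "b \<notin> V" "a \<noteq> b"
  defines "x \<equiv> \<lambda>i. if i = j then w else if i \<in> V then 1 else if i = a then u else if i = b then v else 0"
  shows "eval p x = (\<Sum>\<beta>\<in>{\<beta>\<in>keys p. keys \<beta> \<subseteq> V \<union> {a, b}}.
                      lookup p \<beta> * (w ^ lookup \<beta> j * u ^ lookup \<beta> a * v ^ lookup \<beta> b))"
proof -
  have outside: "mon_eval \<beta> x = 0" if out: "\<not> keys \<beta> \<subseteq> V \<union> {a, b}" for \<beta>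
  proof -
    obtain i where "i \<in> keys \<beta>" "i \<notin> V \<union> {a, b}"
      using out by blast
    moreover from this have "x i = 0"
      using assms(2) by (auto simp: x_def)
    ultimately show ?thesis
      unfolding mon_eval_def by (intro prod_zero) (auto simp: in_keys_iff)
  qed
  have inside: "mon_eval \<beta> x = w ^ lookup \<beta> j * u ^ lookup \<beta> a * v ^ lookup \<beta> b"
    if "keys \<beta> \<subseteq> V \<union> {a, b}" for \<beta>
  proof -
    have "mon_eval \<beta> x = (\<Prod>i\<in>V \<union> {a, b}. x i ^ lookup \<beta> i)"
      using that assms(1) by (intro mon_eval_superset) auto
    also have "\<dots> = (\<Prod>i\<in>V. x i ^ lookup \<beta> i) * u ^ lookup \<beta> a * v ^ lookup \<beta> b"
      using assms(1-5) by (auto simp: prod.union_disjoint x_def)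
    also have "(\<Prod>i\<in>V. x i ^ lookup \<beta> i) = w ^ lookup \<beta> j * (\<Prod>i\<in>V - {j}. x i ^ lookup \<beta> i)"
      using assms(1,2) by (simp add: prod.remove x_def)
    also have "(\<Prod>i\<in>V - {j}. x i ^ lookup \<beta> i) = 1"
      by (intro prod.neutral) (auto simp: x_def)
    finally show ?thesis by simp
  qed
  have "eval p x = (\<Sum>\<beta>\<in>{\<beta>\<in>keys p. keys \<beta> \<subseteq> V \<union> {a, b}}. lookup p \<beta> * mon_eval \<beta> x)"
    unfolding eval_eq_sum_mon_eval by (rule sum.mono_neutral_right) (auto simp: outside)
  then show ?thesis
    by (simp add: inside)
qed

lemma sum_section_point:
  fixes V :: "nat set" and u v w :: real
  assumes "V \<subseteq> {..<n}" "j \<in> V" "a < n" "b < n" "a \<notin> V" "b \<notin> V" "a \<noteq> b"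
  shows "(\<Sum>i<n. if i = j then w else if i \<in> V then 1 else if i = a then u else if i = b then v else 0)
           = w + (real (card V) - 1) + u + v"
  (is "(\<Sum>i<n. ?x i) = _")
proof -
  have fin: "finite V"
    using assms(1) finite_subset by blast
  have "(\<Sum>i<n. ?x i) = (\<Sum>i\<in>V \<union> {a, b}. ?x i)"
    using assms by (intro sum.mono_neutral_right) auto
  also have "\<dots> = (\<Sum>i\<in>V. ?x i) + u + v"
    using fin assms(2-7) by (auto simp: sum.union_disjoint)
  also have "(\<Sum>i\<in>V. ?x i) = w + (\<Sum>i\<in>V - {j}. ?x i)"
    using fin assms(2) by (simp add: sum.remove)
  also have "(\<Sum>i\<in>V - {j}. ?x i) = (\<Sum>i\<in>V - {j}. 1)"
    by (rule sum.cong) auto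
  also have "\<dots> = real (card V) - 1"
  proof -
    have "1 \<le> card V"
      using fin assms(2) by (auto simp: Suc_le_eq card_gt_0_iff)
    then show ?thesis
      using fin assms(2) by (simp add: of_nat_diff)
  qed
  finally show ?thesis .
qed

(* p = 1 restricted to the plane x_j = 2 - |V| - u - v, x_a = u, x_b = v, x_i = 1 on V - {j},
   x_i = 0 elsewhere *)
lemma H_plane_identity:
  assumes pH: "p \<in> H n d" and V: "V \<subseteq> {..<n}" "j \<in> V"
    and ab: "a < n" "b < n" "a \<notin> V" "b \<notin> V" "a \<noteq> b"
  shows "(\<Sum>\<beta>\<in>{\<beta>\<in>keys p. keys \<beta> \<subseteq> V \<union> {a, b}}.
           lookup p \<beta> * ((2 - real (card V) - u - v) ^ lookup \<beta> j * u ^ lookup \<beta> a * v ^ lookup \<beta> b)) = 1"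
  using H_eval[OF pH] sum_section_point[OF V ab, of "2 - real (card V) - u - v" u v]
    eval_section_point[of V j a b p "2 - real (card V) - u - v" u v] finite_subset[OF V(1)] V ab
  by simp

lemma coeff_linear_power_eq_0:
  fixes a b :: "'a::comm_semiring_1"
  assumes "m < k"
  shows "coeff ([:a, b:] ^ m) k = 0"
proof (rule coeff_eq_0)
  have "degree ([:a, b:] ^ m) \<le> degree [:a, b:] * m"
    by (rule degree_power_le)
  also have "\<dots> \<le> m"
    by simp
  finally show "degree ([:a, b:] ^ m) < k"
    using assms by simp
qed

lemma coeff_of_plane_identity:
  fixes c :: "'i \<Rightarrow> real" and ea eb e :: "'i \<Rightarrow> nat"
  assumes fin: "finite S1" "finite S2"
    and identity: "\<And>u v. (\<Sum>i\<in>S1. c i * u ^ ea i * v ^ eb i) + (\<Sum>i\<in>S2. c i * (w - u - v) ^ e i) = 1"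
    and e: "\<And>i. i \<in> S2 \<Longrightarrow> 1 \<le> e i \<and> e i \<le> K"
  shows "(\<Sum>i\<in>{i\<in>{i\<in>S1. eb i = 1}. ea i = K - 1}. c i) =
           (-1) ^ (K - 1) * of_nat K * (\<Sum>i\<in>{i\<in>S2. e i = K}. c i)"
proof -
  define Q where "Q = (\<Sum>i\<in>S2. smult (c i * e i) ([:w, -1:] ^ (e i - 1)))"
  have coeff_v: "(\<Sum>i\<in>{i\<in>S1. eb i = 1}. c i * u ^ ea i) = poly Q u" for u
  proof -
    define P where "P = 1 - (\<Sum>i\<in>S2. smult (c i) ([:w - u, -1:] ^ e i))"
    have "(\<Sum>i\<in>S1. (c i * u ^ ea i) * v ^ eb i) = poly P v" for v
      using identity[of u v] by (simp add: P_def poly_sum algebra_simps)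
    with fin(1) have "(\<Sum>i\<in>{i\<in>S1. eb i = 1}. c i * u ^ ea i) = coeff P 1"
      by (rule coeff_eq_sum_of_poly_eq)
    also have "\<dots> = (\<Sum>i\<in>S2. c i * (of_nat (e i) * (w - u) ^ (e i - 1)))"
      using e by (simp add: P_def coeff_sum coeff_linear_poly_power sum_negf[symmetric] cong: sum.cong)
    also have "\<dots> = poly Q u"
      by (simp add: Q_def poly_sum poly_power mult.assoc)
    finally show ?thesis .
  qed
  have "(\<Sum>i\<in>{i\<in>{i\<in>S1. eb i = 1}. ea i = K - 1}. c i) = coeff Q (K - 1)"
    using coeff_v fin(1) by (intro coeff_eq_sum_of_poly_eq) simp_all
  also have "\<dots> = (\<Sum>i\<in>S2. if e i = K then (-1) ^ (K - 1) * of_nat K * c i else 0)"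
    unfolding Q_def coeff_sum
  proof (rule sum.cong)
    fix i assume "i \<in> S2"
    then consider "e i = K" | "e i - 1 < K - 1"
      using e by fastforce
    then show "coeff (smult (c i * e i) ([:w, -1:] ^ (e i - 1))) (K - 1) =
        (if e i = K then (-1) ^ (K - 1) * of_nat K * c i else 0)"
      by cases (auto simp: coeff_linear_poly_power coeff_linear_power_eq_0)
  qed simp
  also have "\<dots> = (-1) ^ (K - 1) * of_nat K * (\<Sum>i\<in>S2. if e i = K then c i else 0)"
    by (simp add: sum_distrib_left if_distrib cong: if_cong)
  also have "(\<Sum>i\<in>S2. if e i = K then c i else 0) = (\<Sum>i\<in>{i\<in>S2. e i = K}. c i)"
    using fin(2) by (rule sum.inter_filter[symmetric])
  finally show ?thesis .
qed

lemma pair_monomial_exists: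
  assumes pH: "p \<in> H n d"
    and V: "V \<subseteq> {..<n}" "j \<in> V" and ab: "a < n" "b < n" "a \<notin> V" "b \<notin> V" "a \<noteq> b"
    and no_mixed: "\<forall>\<beta>\<in>keys p. 0 < lookup \<beta> j \<longrightarrow> keys \<beta> \<subseteq> V \<union> {a, b} \<longrightarrow> keys \<beta> \<subseteq> V"
    and K_max: "\<forall>\<beta>\<in>keys p. keys \<beta> \<subseteq> V \<longrightarrow> lookup \<beta> j \<le> K"
    and K_attained: "\<exists>\<beta>\<in>keys p. keys \<beta> \<subseteq> V \<and> lookup \<beta> j = K" and "1 \<le> K"
  shows "\<exists>\<beta>\<in>keys p. keys \<beta> \<subseteq> V \<union> {a, b} \<and> lookup \<beta> j = 0 \<and> lookup \<beta> a = K - 1 \<and> lookup \<beta> b = 1"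
proof -
  define S1 where "S1 = {\<beta>\<in>keys p. keys \<beta> \<subseteq> V \<union> {a, b} \<and> lookup \<beta> j = 0}"
  define S2 where "S2 = {\<beta>\<in>keys p. keys \<beta> \<subseteq> V \<union> {a, b} \<and> lookup \<beta> j \<noteq> 0}"
  define w where "w = 2 - real (card V)"
  have S2: "lookup \<beta> a = 0 \<and> lookup \<beta> b = 0 \<and> 1 \<le> lookup \<beta> j \<and> lookup \<beta> j \<le> K" if "\<beta> \<in> S2" for \<beta>
  proof -
    have "keys \<beta> \<subseteq> V"
      using no_mixed that by (auto simp: S2_def)
    then show ?thesis
      using K_max that ab(3,4) by (auto simp: S2_def in_keys_iff)
  qed
  have "(\<Sum>\<beta>\<in>S1. lookup p \<beta> * u ^ lookup \<beta> a * v ^ lookup \<beta> b)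
      + (\<Sum>\<beta>\<in>S2. lookup p \<beta> * (w - u - v) ^ lookup \<beta> j) = 1" for u v
  proof -
    let ?f = "\<lambda>\<beta>. lookup p \<beta> * ((w - u - v) ^ lookup \<beta> j * u ^ lookup \<beta> a * v ^ lookup \<beta> b)"
    have "{\<beta>\<in>keys p. keys \<beta> \<subseteq> V \<union> {a, b}} = S1 \<union> S2"
      by (auto simp: S1_def S2_def)
    then have "sum ?f S1 + sum ?f S2 = 1"
      using H_plane_identity[OF pH V ab, of u v] sum.union_disjoint[of S1 S2 ?f]
      by (simp add: w_def S1_def S2_def disjoint_iff)
    moreover have "sum ?f S2 = (\<Sum>\<beta>\<in>S2. lookup p \<beta> * (w - u - v) ^ lookup \<beta> j)"
      using S2 by (intro sum.cong) auto
    ultimately show ?thesis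
      by (simp add: S1_def mult.assoc)
  qed
  then have coeff_uv: "(\<Sum>\<beta>\<in>{\<beta>\<in>{\<beta>\<in>S1. lookup \<beta> b = 1}. lookup \<beta> a = K - 1}. lookup p \<beta>) =
      (-1) ^ (K - 1) * of_nat K * (\<Sum>\<beta>\<in>{\<beta>\<in>S2. lookup \<beta> j = K}. lookup p \<beta>)"
    using S2 by (intro coeff_of_plane_identity) (simp_all add: S1_def S2_def)
  obtain \<beta>K where \<beta>K: "\<beta>K \<in> keys p" "keys \<beta>K \<subseteq> V" "lookup \<beta>K j = K"
    using K_attained by blast
  have "0 < (\<Sum>\<beta>\<in>{\<beta>\<in>S2. lookup \<beta> j = K}. lookup p \<beta>)"
  proof (rule sum_pos2)
    show "\<beta>K \<in> {\<beta>\<in>S2. lookup \<beta> j = K}"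
      using \<beta>K \<open>1 \<le> K\<close> by (auto simp: S2_def)
    show "0 < lookup p \<beta>K"
      using \<beta>K(1) H_nonneg_coeffs[OF pH] by (simp add: nonneg_coeffs_def in_keys_iff order_less_le)
  qed (use H_nonneg_coeffs[OF pH] in \<open>auto simp: S2_def nonneg_coeffs_def\<close>)
  with coeff_uv \<open>1 \<le> K\<close>
  have "(\<Sum>\<beta>\<in>{\<beta>\<in>{\<beta>\<in>S1. lookup \<beta> b = 1}. lookup \<beta> a = K - 1}. lookup p \<beta>) \<noteq> 0"
    by simp
  then have "{\<beta>\<in>{\<beta>\<in>S1. lookup \<beta> b = 1}. lookup \<beta> a = K - 1} \<noteq> {}"
    by (metis sum.empty)
  then show ?thesis
    by (auto simp: S1_def)
qed

lemma pair_monomial_off_support: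
  assumes pH: "p \<in> H n d" and \<alpha>: "\<alpha> \<in> keys p" "2 \<le> lookup \<alpha> j"
    and Z: "Z \<subseteq> {..<n} - keys \<alpha>"
    and hit: "\<forall>\<beta>\<in>keys p. j \<in> keys \<beta> \<longrightarrow> keys \<beta> \<subseteq> keys \<alpha> \<or> (\<exists>i\<in>keys \<beta>. i \<notin> keys \<alpha> \<union> Z)"
    and P: "P \<subseteq> Z" "card P = 2"
  shows "\<exists>\<beta>\<in>keys p. lookup \<beta> j = 0 \<and> keys \<beta> - keys \<alpha> = P"
proof -
  let ?V = "keys \<alpha>"
  let ?Ks = "(\<lambda>\<beta>. lookup \<beta> j) ` {\<beta>\<in>keys p. keys \<beta> \<subseteq> ?V}"
  have fin: "finite ?Ks" and \<alpha>_K: "lookup \<alpha> j \<in> ?Ks"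
    using \<alpha>(1) by auto
  have "Max ?Ks \<in> ?Ks"
    using fin \<alpha>_K by (intro Max_in) auto
  then have K_attained: "\<exists>\<beta>\<in>keys p. keys \<beta> \<subseteq> ?V \<and> lookup \<beta> j = Max ?Ks"
    by auto
  have K_max: "\<forall>\<beta>\<in>keys p. keys \<beta> \<subseteq> ?V \<longrightarrow> lookup \<beta> j \<le> Max ?Ks"
    using Max_ge[OF fin] by blast
  have K2: "2 \<le> Max ?Ks"
    using Max_ge[OF fin \<alpha>_K] \<alpha>(2) by linarith
  obtain a b where ab_P: "P = {a, b}" "a \<noteq> b"
    using P(2) by (auto simp: card_2_iff)
  then have ab: "a < n" "b < n" "a \<notin> ?V" "b \<notin> ?V" "a \<in> Z" "b \<in> Z"
    using P(1) Z by auto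
  have "\<forall>\<beta>\<in>keys p. 0 < lookup \<beta> j \<longrightarrow> keys \<beta> \<subseteq> ?V \<union> {a, b} \<longrightarrow> keys \<beta> \<subseteq> ?V"
  proof (intro ballI impI)
    fix \<beta> assume \<beta>: "\<beta> \<in> keys p" "0 < lookup \<beta> j" "keys \<beta> \<subseteq> ?V \<union> {a, b}"
    then have "keys \<beta> \<subseteq> ?V \<or> (\<exists>i\<in>keys \<beta>. i \<notin> ?V \<union> Z)"
      using hit by (simp add: in_keys_iff)
    then show "keys \<beta> \<subseteq> ?V"
      using \<beta>(3) ab(5,6) by blast
  qed
  moreover have "j \<in> ?V"
    using \<alpha>(2) by (simp add: in_keys_iff)
  ultimately obtain \<beta> where "\<beta> \<in> keys p" "keys \<beta> \<subseteq> ?V \<union> {a, b}" "lookup \<beta> j = 0"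
    "lookup \<beta> a = Max ?Ks - 1" "lookup \<beta> b = 1"
    using pair_monomial_exists[OF pH H_keys_vars[OF pH \<alpha>(1)] _ ab(1-4) ab_P(2) _ K_max K_attained] K2
    by auto
  moreover from this have "a \<in> keys \<beta>" "b \<in> keys \<beta>"
    using K2 by (auto simp: in_keys_iff)
  ultimately show ?thesis
    using ab_P ab(3,4) by blast
qed

lemma card_pairs_less_N:
  assumes pH: "p \<in> H n d" and \<alpha>: "\<alpha> \<in> keys p" "2 \<le> lookup \<alpha> j"
    and Z: "Z \<subseteq> {..<n} - keys \<alpha>"
    and hit: "\<forall>\<beta>\<in>keys p. j \<in> keys \<beta> \<longrightarrow> keys \<beta> \<subseteq> keys \<alpha> \<or> (\<exists>i\<in>keys \<beta>. i \<notin> keys \<alpha> \<union> Z)"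
  shows "(card Z choose 2) + 1 \<le> N p"
proof -
  let ?Pairs = "{P. P \<subseteq> Z \<and> card P = 2}"
  have "\<forall>P\<in>?Pairs. \<exists>\<beta>. \<beta> \<in> keys p \<and> lookup \<beta> j = 0 \<and> keys \<beta> - keys \<alpha> = P"
    using pair_monomial_off_support[OF pH \<alpha> Z hit] by blast
  then obtain f where f: "\<forall>P\<in>?Pairs. f P \<in> keys p \<and> lookup (f P) j = 0 \<and> keys (f P) - keys \<alpha> = P"
    by (rule bchoice[elim_format]) blast
  have "inj_on f ?Pairs"
  proof (rule inj_onI)
    fix P P' assume "P \<in> ?Pairs" "P' \<in> ?Pairs" "f P = f P'"
    then show "P = P'" using f by metis
  qed
  moreover have "f ` ?Pairs \<subseteq> keys p - {\<alpha>}"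
    using f \<alpha>(2) by auto
  ultimately have "card ?Pairs \<le> card (keys p - {\<alpha>})"
    by (intro card_inj_on_le) auto
  moreover have "card ?Pairs = card Z choose 2"
    using n_subsets[of Z 2] finite_subset[OF Z] by simp
  moreover have "card (keys p - {\<alpha>}) + 1 = N p"
    using card_Suc_Diff1[OF finite_keys \<alpha>(1)] by (simp add: N_def)
  ultimately show ?thesis by linarith
qed

lemma sum_card_occurrences_le:
  assumes pH: "p \<in> H n d"
  shows "(\<Sum>j<n. card {\<beta>\<in>keys p. j \<in> keys \<beta>}) \<le> d * N p"
proof -
  have "(\<Sum>j<n. card {\<beta>\<in>keys p. j \<in> keys \<beta>}) = (\<Sum>j<n. \<Sum>\<beta>\<in>keys p. if j \<in> keys \<beta> then 1 else 0)"
    by (simp add: sum.inter_filter[symmetric])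
  also have "\<dots> = (\<Sum>\<beta>\<in>keys p. \<Sum>j<n. if j \<in> keys \<beta> then 1 else 0)"
    by (rule sum.swap)
  also have "\<dots> \<le> (\<Sum>\<beta>\<in>keys p. d)"
  proof (rule sum_mono)
    fix \<beta> assume "\<beta> \<in> keys p"
    have "(\<Sum>j<n. if j \<in> keys \<beta> then 1 else 0) = card {j\<in>{..<n}. j \<in> keys \<beta>}"
      by (simp add: sum.inter_filter[symmetric])
    also have "\<dots> \<le> card (keys \<beta>)"
      by (rule card_mono) auto
    also have "\<dots> \<le> d"
      using card_keys_le_mon_deg H_mon_deg_le[OF pH \<open>\<beta> \<in> keys p\<close>] le_trans by blast
    finally show "(\<Sum>j<n. if j \<in> keys \<beta> then 1 else 0) \<le> d" .
  qed
  also have "\<dots> = d * N p"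
    by (simp add: N_def)
  finally show ?thesis .
qed

lemma card_keys_less_mon_deg:
  assumes "2 \<le> lookup \<beta> j"
  shows "card (keys \<beta>) < mon_deg \<beta>"
proof -
  have "keys (\<beta> - var_exp j) = keys \<beta>"
    using assms by (auto simp: in_keys_iff lookup_minus lookup_single when_def)
  then show ?thesis
    using card_keys_le_mon_deg[of "\<beta> - var_exp j"] mon_deg_minus_var_exp[of \<beta> j] assms by simp
qed

lemma two_mult_choose_two: "2 * (z choose 2) = z * (z - 1)"
proof (induction z)
  case (Suc z)
  have "Suc z choose 2 = z + (z choose 2)"
    by (simp add: numeral_2_eq_2)
  with Suc show ?case
    by (cases z) (simp_all add: algebra_simps)
qed simp

lemma quartic_gap:
  fixes D Z :: int
  assumes "2 \<le> D" "D\<^sup>2 + D + 3 \<le> Z"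
  shows "2 * D * (Z + D\<^sup>2 + D - 4) < Z * (Z - 1)"
proof -
  have "D * 1 \<le> D * D"
    using assms(1) by (intro mult_left_mono) auto
  then have "D \<le> D\<^sup>2"
    by (simp add: power2_eq_square)
  then have "(D\<^sup>2 + D + 3) * (D\<^sup>2 - D + 2) \<le> Z * (Z - 1 - 2 * D)"
    using assms by (intro mult_mono) linarith+
  moreover have "(D\<^sup>2 + D + 3) * (D\<^sup>2 - D + 2) = 2 * D * (D\<^sup>2 + D - 4) + ((D\<^sup>2 - D)\<^sup>2 + D\<^sup>2 + 7 * D + 6)"
    by (simp add: algebra_simps power2_eq_square)
  moreover have "0 < (D\<^sup>2 - D)\<^sup>2 + D\<^sup>2 + 7 * D + 6"
    using assms(1) by (simp add: add_nonneg_pos)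
  moreover have "Z * (Z - 1) = Z * (Z - 1 - 2 * D) + 2 * D * Z"
    "2 * D * (Z + D\<^sup>2 + D - 4) = 2 * D * Z + 2 * D * (D\<^sup>2 + D - 4)"
    by (simp_all add: algebra_simps)
  ultimately show ?thesis
    by linarith
qed

lemma pair_count_arith:
  fixes n d m z N :: nat
  assumes n: "2 * d\<^sup>2 + 2 * d \<le> n" and d: "2 \<le> d" and m: "n * m \<le> d * N"
    and N: "N \<le> (n - 1) * d + 1" and z: "n + 2 \<le> z + d + m"
  shows "N < (z choose 2) + 1"
proof -
  have "n * m \<le> d * ((n - 1) * d + 1)"
    using m N by (meson le_trans mult_le_mono2)
  also have "\<dots> = (n - 1) * d\<^sup>2 + d"
    by (simp add: algebra_simps power2_eq_square)
  also have "\<dots> < (n - 1) * d\<^sup>2 + d\<^sup>2"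
    using d by (simp add: power2_eq_square)
  also have "\<dots> = n * d\<^sup>2"
    using n d by (cases n) simp_all
  finally have "m < d\<^sup>2"
    by simp
  with n z have "n + 3 \<le> z + d + d\<^sup>2" "d\<^sup>2 + d + 3 \<le> z"
    by linarith+
  then have ints: "int n + 3 \<le> int z + int d + (int d)\<^sup>2" "(int d)\<^sup>2 + int d + 3 \<le> int z"
    by (metis of_nat_add of_nat_le_iff of_nat_numeral of_nat_power)+
  have "int ((n - 1) * d) = int d * (int n - 1)"
    using n d by (simp add: of_nat_diff algebra_simps)
  also have "2 * \<dots> \<le> 2 * int d * (int z + (int d)\<^sup>2 + int d - 4)"
    using ints(1) by (simp add: mult_left_mono)
  also have "\<dots> < int z * (int z - 1)"
    using ints(2) d by (intro quartic_gap) simp_all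
  also have "\<dots> = int (z * (z - 1))"
    by (cases z) (simp_all add: algebra_simps)
  also have "\<dots> = 2 * int (z choose 2)"
    unfolding two_mult_choose_two[symmetric] by simp
  finally have "(n - 1) * d < z choose 2"
    by linarith
  with N show ?thesis
    by linarith
qed

lemma exists_free_variables:
  assumes "\<alpha> \<in> keys p" "j \<in> keys \<alpha>"
  obtains Z where "Z \<subseteq> {..<n} - keys \<alpha>"
    and "n + 1 \<le> card Z + card (keys \<alpha>) + card {\<beta>\<in>keys p. j \<in> keys \<beta>}"
    and "\<forall>\<beta>\<in>keys p. j \<in> keys \<beta> \<longrightarrow> keys \<beta> \<subseteq> keys \<alpha> \<or> (\<exists>i\<in>keys \<beta>. i \<notin> keys \<alpha> \<union> Z)"
proof -
  let ?V = "keys \<alpha>"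
  define B where "B = {\<beta>\<in>keys p. j \<in> keys \<beta> \<and> \<not> keys \<beta> \<subseteq> ?V}"
  have "\<forall>\<beta>\<in>B. \<exists>i. i \<in> keys \<beta> - ?V"
    by (auto simp: B_def)
  then obtain out where out: "\<forall>\<beta>\<in>B. out \<beta> \<in> keys \<beta> - ?V"
    by (rule bchoice[elim_format]) blast
  have "card (out ` B) + 1 \<le> card {\<beta>\<in>keys p. j \<in> keys \<beta>}"
  proof -
    have "B \<subseteq> {\<beta>\<in>keys p. j \<in> keys \<beta>} - {\<alpha>}"
      by (auto simp: B_def)
    then have "card B \<le> card ({\<beta>\<in>keys p. j \<in> keys \<beta>} - {\<alpha>})"
      by (intro card_mono) auto
    also have "\<dots> + 1 = card {\<beta>\<in>keys p. j \<in> keys \<beta>}"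
      using assms card_Suc_Diff1[of "{\<beta>\<in>keys p. j \<in> keys \<beta>}" \<alpha>] by simp
    finally show ?thesis
      using card_image_le[of B out] by (simp add: B_def)
  qed
  moreover define Z where "Z = {..<n} - (?V \<union> out ` B)"
  moreover have "card {..<n} \<le> card Z + card (?V \<union> out ` B)"
    using diff_card_le_card_Diff[of "?V \<union> out ` B" "{..<n}"] by (simp add: Z_def B_def)
  moreover have "\<forall>\<beta>\<in>keys p. j \<in> keys \<beta> \<longrightarrow> keys \<beta> \<subseteq> ?V \<or> (\<exists>i\<in>keys \<beta>. i \<notin> ?V \<union> Z)"
    using out by (auto simp: B_def Z_def)
  ultimately show thesis
    using that[of Z] card_Un_le[of ?V "out ` B"] by fastforce
qed

lemma N_gt_if_all_vars_squared:
  assumes pH: "p \<in> H n d" and "1 \<le> n" and n: "2 * d\<^sup>2 + 2 * d \<le> n"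
    and squared: "\<forall>j<n. \<exists>\<beta>\<in>keys p. 2 \<le> lookup \<beta> j"
  shows "(n - 1) * d + 1 < N p"
proof (rule ccontr)
  assume "\<not> ?thesis"
  then have N_small: "N p \<le> (n - 1) * d + 1" by simp
  define M where "M j = card {\<beta>\<in>keys p. j \<in> keys \<beta>}" for j
  have "Min (M ` {..<n}) \<in> M ` {..<n}"
    using \<open>1 \<le> n\<close> by (intro Min_in) (auto simp: lessThan_empty_iff)
  then obtain j where "j < n" and j_min: "M j = Min (M ` {..<n})"
    by auto
  have "n * M j \<le> d * N p"
  proof -
    have "n * M j = (\<Sum>i<n. M j)" by simp
    also have "\<dots> \<le> (\<Sum>i<n. M i)"
      unfolding j_min by (intro sum_mono Min_le) auto
    finally show ?thesis
      using sum_card_occurrences_le[OF pH] by (simp add: M_def)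
  qed
  obtain \<alpha> where \<alpha>: "\<alpha> \<in> keys p" "2 \<le> lookup \<alpha> j"
    using squared \<open>j < n\<close> by blast
  then have "j \<in> keys \<alpha>"
    by (simp add: in_keys_iff)
  have "card (keys \<alpha>) + 1 \<le> d"
    using card_keys_less_mon_deg[OF \<alpha>(2)] H_mon_deg_le[OF pH \<alpha>(1)] by simp
  moreover have "1 \<le> card (keys \<alpha>)"
    using \<open>j \<in> keys \<alpha>\<close> by (auto simp: Suc_le_eq card_gt_0_iff)
  ultimately have "2 \<le> d"
    by simp
  obtain Z where Z: "Z \<subseteq> {..<n} - keys \<alpha>" and card_Z: "n + 1 \<le> card Z + card (keys \<alpha>) + M j"
    and hit: "\<forall>\<beta>\<in>keys p. j \<in> keys \<beta> \<longrightarrow> keys \<beta> \<subseteq> keys \<alpha> \<or> (\<exists>i\<in>keys \<beta>. i \<notin> keys \<alpha> \<union> Z)"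
    using exists_free_variables[OF \<alpha>(1) \<open>j \<in> keys \<alpha>\<close>] unfolding M_def by blast
  have "(card Z choose 2) + 1 \<le> N p"
    using card_pairs_less_N[OF pH \<alpha> Z hit] .
  moreover have "N p < (card Z choose 2) + 1"
    using pair_count_arith[OF n \<open>2 \<le> d\<close> \<open>n * M j \<le> d * N p\<close> N_small, of "card Z"]
      card_Z \<open>card (keys \<alpha>) + 1 \<le> d\<close> by linarith
  ultimately show False
    by linarith
qed

theorem theorem2:
  fixes n d :: nat and p :: mpoly
  assumes "n \<ge> 1" and "n \<ge> 2 * d ^ 2 + 2 * d" and "p \<in> H n d"
  shows "N p \<ge> (n - 1) * d + 1 \<and> (N p = (n - 1) * d + 1 \<longrightarrow> p \<in> W n)"
proof (cases "\<exists>j<n. \<forall>\<beta>\<in>keys p. lookup \<beta> j \<le> 1")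
  case True
  then obtain j where "j < n" "\<forall>\<beta>\<in>keys p. lookup \<beta> j \<le> 1"
    by blast
  then obtain A where "nonneg_coeffs A" "p - 1 = (svar n - 1) * A" "\<forall>\<gamma>\<in>keys A. mon_deg \<gamma> < d"
    using H_linear_var_factor[OF assms(3)] by blast
  then show ?thesis
    using factor_card_keys_lower_bound[OF assms(3,1)] factor_in_W[OF H_nonneg_coeffs[OF assms(3)]]
    by blast
next
  case False
  then have "\<forall>j<n. \<exists>\<beta>\<in>keys p. 2 \<le> lookup \<beta> j"
    by (auto simp: not_le Suc_le_eq numeral_2_eq_2)
  then have "(n - 1) * d + 1 < N p"
    using N_gt_if_all_vars_squared[OF assms(3,1)] assms(2) by simp
  then show ?thesis
    by simp
qed

end
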